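(* Let $p\in(1,2)$. For $\gamma>0$ let $r_\gamma>0$ satisfy $r_\gamma=o(e^{-\gamma^p})$ and $\ln(r_\gamma e^{\gamma^p})=o(\gamma^p)$ as $\gamma\to\infty$, and let $\varphi_\gamma(x)=\left(\frac2p\right)^{1/p}\gamma\left(1-\frac1{\gamma^p}\ln\left(1+\frac{|x|^2}{r_\gamma^2}\right)\right)_+$ on $\mathbb R^2$. For $t\in[0,1]$ let $\tau(t,\gamma)\in[0,(2/p)^{1/p}\gamma]$ be defined by $$\frac{\int_{\mathbb R^2}\left(e^{(\varphi_\gamma-\tau)_+^p}-1\right)dx}{\int_{\mathbb R^2}\left(e^{\varphi_\gamma^p}-1\right)dx}=t.$$ Then for any fixed $\bar t\in(0,1]$, $\tau(t,\gamma)\to0$ as $\gamma\to\infty$, uniformly for $t\in[\bar t,1]$.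
   Context: $(s)_+=\max\{s,0\}$. The left-hand side of the defining relation is a continuous strictly decreasing function of $\tau\in[0,(2/p)^{1/p}\gamma]$ from $1$ to $0$, so $\tau(t,\gamma)$ is well defined (with $\tau(0,\gamma)=(2/p)^{1/p}\gamma$, $\tau(1,\gamma)=0$). *)

theory Defs
  imports "HOL-Analysis.Analysis" "HOL-Library.Landau_Symbols"
begin

definition phi :: "real \<Rightarrow> (real \<Rightarrow> real) \<Rightarrow> real \<Rightarrow> real^2 \<Rightarrow> real" where
  "phi p r \<gamma> x = (2 / p) powr (1 / p) * \<gamma> *
     max 0 (1 - ln (1 + (norm x)\<^sup>2 / (r \<gamma>)\<^sup>2) / \<gamma> powr p)"

definition ratio :: "real \<Rightarrow> (real \<Rightarrow> real) \<Rightarrow> real \<Rightarrow> real \<Rightarrow> real" where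
  "ratio p r \<gamma> \<tau> =
     (LINT x|lborel. exp ((max 0 (phi p r \<gamma> x - \<tau>)) powr p) - 1) /
     (LINT x|lborel. exp ((phi p r \<gamma> x) powr p) - 1)"

definition tau :: "real \<Rightarrow> (real \<Rightarrow> real) \<Rightarrow> real \<Rightarrow> real \<Rightarrow> real" where
  "tau p r t \<gamma> = (THE \<tau>. \<tau> \<in> {0 .. (2 / p) powr (1 / p) * \<gamma>} \<and> ratio p r \<gamma> \<tau> = t)"

end

theory Submission
  imports Defs
begin

text \<open>
  Let N(\<tau>) be the numerator of the ratio. Since \<phi> is continuous with its maximum \<phi>(0) at
  the origin, N is continuous and strictly decreasing on [0, \<phi>(0)] and vanishes at \<phi>(0). So
  tau t \<gamma> is the unique root of N(\<tau>) = t N(0), and tau t \<gamma> < e as soon as N(e) < tbar N(0).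

  Where \<phi> \<ge> M, convexity gives (\<phi> - e)^p \<le> \<phi>^p - e (M - e)^(p-1), so there the integrand
  of N(e) is a small multiple of that of N(0) once M is large. Where \<phi> < M it is at most
  exp(M^p) on the support of \<phi>, a disc of area pi r^2 (exp(\<gamma>^p) - 1). On a smaller disc
  \<phi> stays close to \<phi>(0), and since \<phi>(0)^p = (2/p) \<gamma>^p with p < 2 this yields
  N(0) \<ge> pi r^2 (exp(\<gamma>^p) - 1) (exp((2 - p)/4 \<gamma>^p) - 1), which swamps that error term.

  All these bounds scale like r^2.
\<close>

lemma powr_sub_le:
  fixes y e M p :: real
  assumes "1 < p" "0 < e" "e < M" "M \<le> y"
  shows "(y - e) powr p \<le> y powr p - e * (M - e) powr (p - 1)"
proof -
  have split: "z powr p = z * z powr (p - 1)" if "0 < z" for z :: real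
    using that powr_add[of z 1 "p - 1"] by simp
  have "e * (M - e) powr (p - 1) \<le> e * (y - e) powr (p - 1)"
    using assms by (intro mult_left_mono powr_mono2) auto
  also have "\<dots> = y * (y - e) powr (p - 1) - (y - e) * (y - e) powr (p - 1)"
    by (simp add: algebra_simps)
  also have "\<dots> \<le> y * y powr (p - 1) - (y - e) * (y - e) powr (p - 1)"
    using assms by (simp add: mult_left_mono powr_mono2)
  also have "\<dots> = y powr p - (y - e) powr p"
    using assms split[of y] split[of "y - e"] by simp
  finally show ?thesis by simp
qed

lemma exp_le_twice_exp_minus_1:
  fixes z :: real
  assumes "1 \<le> z"
  shows "exp z \<le> 2 * (exp z - 1)"
  unfolding right_diff_distrib using assms exp_ge_add_one_self[of z] by linarith

lemma filterlim_powr_at_top: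
  fixes p :: real
  assumes "0 < p"
  shows "filterlim (\<lambda>x. x powr p) at_top at_top"
  unfolding filterlim_at_top
proof
  fix Z :: real
  show "\<forall>\<^sub>F x in at_top. Z \<le> x powr p"
  proof (rule eventually_mono[OF eventually_gt_at_top[of "\<bar>Z\<bar> powr (1 / p)"]])
    fix x assume x: "\<bar>Z\<bar> powr (1 / p) < x"
    have "\<bar>Z\<bar> = (\<bar>Z\<bar> powr (1 / p)) powr p"
      using assms by (simp add: powr_powr)
    also have "\<dots> \<le> x powr p"
      using x assms by (intro powr_mono2) auto
    finally show "Z \<le> x powr p" by linarith
  qed
qed

lemma measure_cball_real2: "0 \<le> \<rho> \<Longrightarrow> measure lborel (cball (c::real^2) \<rho>) = pi * \<rho>\<^sup>2"
  using content_cball[of \<rho> c] by (simp add: unit_ball_vol_2)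

lemma AE_lborel_ex_in_ball:
  fixes c :: "'a::euclidean_space"
  assumes "AE x in lborel. P x" "0 < \<epsilon>"
  shows "\<exists>x\<in>ball c \<epsilon>. P x"
proof (rule ccontr)
  assume none: "\<not> (\<exists>x\<in>ball c \<epsilon>. P x)"
  from assms(1) obtain Z where Z: "{x \<in> space lborel. \<not> P x} \<subseteq> Z" "emeasure lborel Z = 0"
    "Z \<in> sets lborel"
    by (rule AE_E)
  have "ball c \<epsilon> \<in> null_sets lborel"
    using Z(1) none by (intro null_sets_subset[OF null_setsI[OF Z(2,3)]]) auto
  hence "measure lborel (ball c \<epsilon>) = 0"
    by (rule measure_eq_0_null_sets)
  thus False
    using content_ball_pos[OF assms(2), of c] by simp
qed

lemma ln_one_plus_sq_div_le_iff:
  fixes n \<rho> a :: real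
  assumes "0 \<le> n" "0 < \<rho>" "0 \<le> a"
  shows "ln (1 + n\<^sup>2 / \<rho>\<^sup>2) \<le> a \<longleftrightarrow> n \<le> \<rho> * sqrt (exp a - 1)"
proof -
  have "ln (1 + n\<^sup>2 / \<rho>\<^sup>2) \<le> a \<longleftrightarrow> 1 + n\<^sup>2 / \<rho>\<^sup>2 \<le> exp a"
    using ln_le_cancel_iff[of "1 + n\<^sup>2 / \<rho>\<^sup>2" "exp a"] by (simp add: add_pos_nonneg)
  also have "\<dots> \<longleftrightarrow> n\<^sup>2 \<le> (\<rho> * sqrt (exp a - 1))\<^sup>2"
    using assms by (simp add: power_mult_distrib field_simps)
  also have "\<dots> \<longleftrightarrow> n \<le> \<rho> * sqrt (exp a - 1)"
    using assms power2_le_iff_abs_le[of "\<rho> * sqrt (exp a - 1)" n] by simp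
  finally show ?thesis .
qed

definition cut_density :: "real \<Rightarrow> (real \<Rightarrow> real) \<Rightarrow> real \<Rightarrow> real \<Rightarrow> real^2 \<Rightarrow> real" where
  "cut_density p r \<gamma> \<tau> x = exp ((max 0 (phi p r \<gamma> x - \<tau>)) powr p) - 1"

definition cut_mass :: "real \<Rightarrow> (real \<Rightarrow> real) \<Rightarrow> real \<Rightarrow> real \<Rightarrow> real" where
  "cut_mass p r \<gamma> \<tau> = (LINT x|lborel. cut_density p r \<gamma> \<tau> x)"

locale log_profile =
  fixes p :: real and r :: "real \<Rightarrow> real" and \<gamma> :: real
  assumes p_gt_1: "1 < p" and gamma_pos: "0 < \<gamma>" and r_pos: "0 < r \<gamma>"
begin

abbreviation \<phi> :: "real^2 \<Rightarrow> real" where "\<phi> \<equiv> phi p r \<gamma>"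
abbreviation G :: "real \<Rightarrow> real^2 \<Rightarrow> real" where "G \<equiv> cut_density p r \<gamma>"
abbreviation N :: "real \<Rightarrow> real" where "N \<equiv> cut_mass p r \<gamma>"
abbreviation peak :: real where "peak \<equiv> (2 / p) powr (1 / p) * \<gamma>"

definition level_radius :: "real \<Rightarrow> real" where
  "level_radius s = r \<gamma> * sqrt (exp (s * \<gamma> powr p) - 1)"

lemma level_radius_nonneg: "0 \<le> s \<Longrightarrow> 0 \<le> level_radius s"
  unfolding level_radius_def using r_pos gamma_pos by simp

lemma peak_pos: "0 < peak"
  using p_gt_1 gamma_pos by simp

lemma peak_mult_powr: "0 \<le> s \<Longrightarrow> (peak * s) powr p = 2 / p * \<gamma> powr p * s powr p"
  using p_gt_1 gamma_pos by (simp add: powr_mult powr_powr)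

lemma phi_nonneg: "0 \<le> \<phi> x"
  unfolding phi_def using p_gt_1 gamma_pos by simp

lemma phi_le_peak: "\<phi> x \<le> peak"
proof -
  have "0 \<le> ln (1 + (norm x)\<^sup>2 / (r \<gamma>)\<^sup>2) / \<gamma> powr p"
    by simp
  thus ?thesis
    unfolding phi_def using peak_pos by (simp add: mult_left_le)
qed

lemma phi_0: "\<phi> 0 = peak"
  unfolding phi_def by simp

lemma phi_ge_on_disc:
  assumes "0 \<le> s" "norm x \<le> level_radius s"
  shows "peak * (1 - s) \<le> \<phi> x"
proof -
  have "ln (1 + (norm x)\<^sup>2 / (r \<gamma>)\<^sup>2) \<le> s * \<gamma> powr p"
    using assms r_pos gamma_pos
    by (subst ln_one_plus_sq_div_le_iff) (auto simp: level_radius_def)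
  hence "ln (1 + (norm x)\<^sup>2 / (r \<gamma>)\<^sup>2) / \<gamma> powr p \<le> s"
    using gamma_pos by (simp add: pos_divide_le_eq)
  hence "1 - s \<le> max 0 (1 - ln (1 + (norm x)\<^sup>2 / (r \<gamma>)\<^sup>2) / \<gamma> powr p)"
    by simp
  thus ?thesis
    unfolding phi_def using peak_pos by (simp add: mult_left_mono)
qed

lemma phi_eq_0_outside:
  assumes "level_radius 1 < norm x"
  shows "\<phi> x = 0"
proof -
  have "\<gamma> powr p < ln (1 + (norm x)\<^sup>2 / (r \<gamma>)\<^sup>2)"
    using assms r_pos ln_one_plus_sq_div_le_iff[of "norm x" "r \<gamma>" "\<gamma> powr p"]
    by (auto simp: level_radius_def)
  thus ?thesis
    unfolding phi_def using gamma_pos by simp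
qed

lemma continuous_on_phi: "continuous_on UNIV \<phi>"
proof -
  have "1 + (norm x)\<^sup>2 / (r \<gamma>)\<^sup>2 \<noteq> 0" for x :: "real^2"
    using add_pos_nonneg[of 1 "(norm x)\<^sup>2 / (r \<gamma>)\<^sup>2"] by simp
  thus ?thesis
    unfolding phi_def[abs_def] using gamma_pos r_pos by (intro continuous_intros) auto
qed

lemma cut_density_0: "G 0 x = exp (\<phi> x powr p) - 1"
  unfolding cut_density_def using phi_nonneg[of x] by simp

lemma cut_density_nonneg: "0 \<le> G \<tau> x"
  unfolding cut_density_def by simp

lemma cut_density_antimono: "\<sigma> \<le> \<tau> \<Longrightarrow> G \<tau> x \<le> G \<sigma> x"
  unfolding cut_density_def using p_gt_1 by (auto intro!: powr_mono2)

lemma cut_density_strict_antimono: "\<sigma> < \<tau> \<Longrightarrow> \<sigma> < \<phi> x \<Longrightarrow> G \<tau> x < G \<sigma> x"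
  unfolding cut_density_def using p_gt_1 by (auto intro!: powr_less_mono2)

lemma cut_density_eq_0_outside: "0 \<le> \<tau> \<Longrightarrow> level_radius 1 < norm x \<Longrightarrow> G \<tau> x = 0"
  unfolding cut_density_def by (simp add: phi_eq_0_outside)

lemma cut_density_eq_0_above_peak: "peak \<le> \<tau> \<Longrightarrow> G \<tau> x = 0"
  unfolding cut_density_def using phi_le_peak[of x] by simp

lemma continuous_on_cut_density: "continuous_on UNIV (G \<tau>)"
  unfolding cut_density_def[abs_def] using p_gt_1
  by (intro continuous_intros continuous_on_powr' continuous_on_phi) auto

lemma integrable_cut_density:
  assumes "0 \<le> \<tau>"
  shows "integrable lborel (G \<tau>)"
proof -
  let ?D = "cball (0::real^2) (level_radius 1)"
  have "(\<lambda>x. indicator ?D x *\<^sub>R G \<tau> x) = G \<tau>"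
    using cut_density_eq_0_outside[OF assms] by (auto simp: indicator_def fun_eq_iff)
  moreover have "integrable lborel (\<lambda>x. indicator ?D x *\<^sub>R G \<tau> x)"
    by (intro borel_integrable_compact continuous_on_subset[OF continuous_on_cut_density]) auto
  ultimately show ?thesis by simp
qed

lemma cut_mass_antimono: "0 \<le> \<sigma> \<Longrightarrow> \<sigma> \<le> \<tau> \<Longrightarrow> N \<tau> \<le> N \<sigma>"
  unfolding cut_mass_def by (intro integral_mono integrable_cut_density cut_density_antimono) auto

lemma cut_mass_peak: "N peak = 0"
proof -
  have "G peak = (\<lambda>x. 0)"
    by (simp add: fun_eq_iff cut_density_eq_0_above_peak)
  thus ?thesis
    unfolding cut_mass_def by simp
qed

lemma continuous_on_cut_mass: "continuous_on {0..} N"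
proof (rule continuous_on_sequentiallyI)
  fix \<tau> :: "nat \<Rightarrow> real" and \<tau>\<^sub>0
  assume \<tau>: "\<forall>n. \<tau> n \<in> {0..}" and "\<tau>\<^sub>0 \<in> {0..}" and lim: "\<tau> \<longlonglongrightarrow> \<tau>\<^sub>0"
  show "(\<lambda>n. N (\<tau> n)) \<longlonglongrightarrow> N \<tau>\<^sub>0"
    unfolding cut_mass_def
  proof (rule integral_dominated_convergence[where w = "G 0"])
    show "AE x in lborel. (\<lambda>n. G (\<tau> n) x) \<longlonglongrightarrow> G \<tau>\<^sub>0 x"
      unfolding cut_density_def using p_gt_1 by (intro AE_I2 tendsto_intros lim) auto
    show "AE x in lborel. norm (G (\<tau> n) x) \<le> G 0 x" for n
      using \<tau> cut_density_nonneg cut_density_antimono by (intro AE_I2) auto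
  qed (use \<tau> \<open>\<tau>\<^sub>0 \<in> {0..}\<close> integrable_cut_density in auto)
qed

lemma cut_mass_strict_antimono:
  assumes "0 \<le> \<sigma>" "\<sigma> < \<tau>" "\<sigma> < peak"
  shows "N \<tau> < N \<sigma>"
proof -
  let ?d = "\<lambda>x. G \<sigma> x - G \<tau> x"
  have d_int: "integrable lborel ?d" and d_nonneg: "AE x in lborel. 0 \<le> ?d x"
    using assms integrable_cut_density cut_density_antimono by auto
  have N_diff: "N \<sigma> - N \<tau> = integral\<^sup>L lborel ?d"
    unfolding cut_mass_def using assms integrable_cut_density by (simp add: integral_diff)
  have "open {x. \<sigma> < \<phi> x}"
    by (rule open_Collect_less) (auto intro: continuous_on_phi)
  moreover have "0 \<in> {x. \<sigma> < \<phi> x}"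
    using assms by (simp add: phi_0)
  ultimately obtain \<epsilon> where \<epsilon>: "0 < \<epsilon>" "ball 0 \<epsilon> \<subseteq> {x. \<sigma> < \<phi> x}"
    by (metis open_contains_ball)
  have "N \<sigma> - N \<tau> \<noteq> 0"
  proof
    assume "N \<sigma> - N \<tau> = 0"
    hence "AE x in lborel. ?d x = 0"
      using integral_nonneg_eq_0_iff_AE[OF d_int d_nonneg] N_diff by simp
    then obtain x where "x \<in> ball 0 \<epsilon>" "?d x = 0"
      using AE_lborel_ex_in_ball[OF _ \<epsilon>(1)] by blast
    thus False
      using \<epsilon>(2) cut_density_strict_antimono[OF assms(2), of x] by auto
  qed
  thus ?thesis
    using cut_mass_antimono[of \<sigma> \<tau>] assms by simp
qed

lemma cut_mass_0_pos: "0 < N 0"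
  using cut_mass_strict_antimono[of 0 peak] cut_mass_peak peak_pos by simp

lemma ratio_eq_cut_mass: "ratio p r \<gamma> \<tau> = N \<tau> / N 0"
  unfolding ratio_def cut_mass_def cut_density_def using phi_nonneg by simp

lemma tau_spec:
  assumes "0 \<le> t" "t \<le> 1"
  shows "tau p r t \<gamma> \<in> {0..peak}" and "N (tau p r t \<gamma>) = t * N 0"
proof -
  obtain \<tau> where \<tau>: "0 \<le> \<tau>" "\<tau> \<le> peak" "N \<tau> = t * N 0"
    using IVT2'[of N peak "t * N 0" 0] continuous_on_subset[OF continuous_on_cut_mass]
      cut_mass_peak cut_mass_0_pos peak_pos assms
    by (auto simp: mult_left_le_one_le)
  have "\<tau>' = \<tau>" if "\<tau>' \<in> {0..peak}" "ratio p r \<gamma> \<tau>' = t" for \<tau>'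
  proof -
    have "N \<tau>' = N \<tau>"
      using that \<tau> cut_mass_0_pos by (simp add: ratio_eq_cut_mass field_simps)
    thus ?thesis
      using cut_mass_strict_antimono[of \<tau> \<tau>'] cut_mass_strict_antimono[of \<tau>' \<tau>] \<tau> that
      by (cases "\<tau> < \<tau>'"; cases "\<tau>' < \<tau>") auto
  qed
  moreover have "\<tau> \<in> {0..peak} \<and> ratio p r \<gamma> \<tau> = t"
    using \<tau> cut_mass_0_pos by (simp add: ratio_eq_cut_mass)
  ultimately have "tau p r t \<gamma> = \<tau>"
    unfolding tau_def by (intro the_equality) auto
  thus "tau p r t \<gamma> \<in> {0..peak}" and "N (tau p r t \<gamma>) = t * N 0"
    using \<tau> by auto
qed

lemma tau_lt:
  assumes "0 \<le> t" "t \<le> 1" "0 \<le> e" "N e < t * N 0"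
  shows "tau p r t \<gamma> < e"
  using tau_spec[OF assms(1,2)] cut_mass_antimono[of e "tau p r t \<gamma>"] assms by force

lemma cut_density_le:
  assumes "0 < e" "e < M" "1 \<le> M" and small: "2 * exp (- (e * (M - e) powr (p - 1))) \<le> c"
  shows "G e x \<le> c * G 0 x + indicator (cball 0 (level_radius 1)) x * exp (M powr p)"
proof -
  let ?D = "e * (M - e) powr (p - 1)"
  have cG_nonneg: "0 \<le> c * G 0 x"
    using small cut_density_nonneg[of 0 x] by (smt (verit) exp_gt_zero mult_nonneg_nonneg)
  consider (high) "M \<le> \<phi> x" | (low) "\<phi> x < M" "x \<in> cball 0 (level_radius 1)"
    | (outside) "x \<notin> cball 0 (level_radius 1)"
    by linarith
  then show ?thesis
  proof cases
    case high
    have "1 \<le> \<phi> x powr p"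
      using high assms p_gt_1 by (intro ge_one_powr_ge_zero) auto
    have "G e x \<le> exp ((\<phi> x - e) powr p)"
      unfolding cut_density_def using high assms by simp
    also have "\<dots> \<le> exp (\<phi> x powr p - ?D)"
      using powr_sub_le[OF p_gt_1 assms(1,2) high] by simp
    also have "\<dots> = exp (- ?D) * exp (\<phi> x powr p)"
      by (simp add: exp_diff exp_minus field_simps)
    also have "\<dots> \<le> exp (- ?D) * (2 * (exp (\<phi> x powr p) - 1))"
      using exp_le_twice_exp_minus_1[OF \<open>1 \<le> \<phi> x powr p\<close>] by simp
    also have "\<dots> = 2 * exp (- ?D) * G 0 x"
      by (simp add: cut_density_0)
    also have "\<dots> \<le> c * G 0 x"
      using small cut_density_nonneg[of 0 x] by (rule mult_right_mono)
    finally show ?thesis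
      by (simp add: add_increasing2)
  next
    case low
    have "G e x \<le> G 0 x"
      using assms by (intro cut_density_antimono) simp
    also have "\<dots> \<le> exp (M powr p)"
    proof -
      have "exp (\<phi> x powr p) \<le> exp (M powr p)"
        using low phi_nonneg[of x] p_gt_1 by (simp add: powr_mono2)
      thus ?thesis
        unfolding cut_density_0 by linarith
    qed
    finally show ?thesis
      using low cG_nonneg by simp
  next
    case outside
    thus ?thesis
      using assms cut_density_eq_0_outside[of e x] cG_nonneg by (simp add: dist_norm)
  qed
qed

lemma cut_mass_le:
  assumes "0 < e" "e < M" "1 \<le> M" "2 * exp (- (e * (M - e) powr (p - 1))) \<le> c"
  shows "N e \<le> c * N 0 + pi * (r \<gamma>)\<^sup>2 * (exp (\<gamma> powr p) - 1) * exp (M powr p)"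
proof -
  let ?D = "cball (0::real^2) (level_radius 1)"
  have int_D: "integrable lborel (\<lambda>x. indicator ?D x * exp (M powr p))"
    using emeasure_lborel_cball_finite
    by (intro integrable_mult_left integrable_real_indicator) auto
  have "N e \<le> (LINT x|lborel. c * G 0 x + indicator ?D x * exp (M powr p))"
    unfolding cut_mass_def
    by (intro integral_mono cut_density_le Bochner_Integration.integrable_add
        integrable_mult_right integrable_cut_density int_D) (use assms in auto)
  also have "\<dots> = c * N 0 + measure lborel ?D * exp (M powr p)"
    unfolding cut_mass_def using int_D integrable_cut_density[of 0] by simp
  also have "measure lborel ?D = pi * (r \<gamma>)\<^sup>2 * (exp (\<gamma> powr p) - 1)"
    using level_radius_nonneg[of 1] gamma_pos
    by (simp add: measure_cball_real2 level_radius_def power_mult_distrib)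
  finally show ?thesis .
qed

lemma cut_mass_0_ge:
  assumes "0 \<le> u" "u \<le> 1"
  shows "pi * (r \<gamma>)\<^sup>2 * (exp (u * \<gamma> powr p) - 1) * (exp ((peak * (1 - u)) powr p) - 1) \<le> N 0"
proof -
  let ?D = "cball (0::real^2) (level_radius u)"
  let ?K = "exp ((peak * (1 - u)) powr p) - 1"
  have int_D: "integrable lborel (\<lambda>x. indicator ?D x * ?K)"
    using emeasure_lborel_cball_finite
    by (intro integrable_mult_left integrable_real_indicator) auto
  have "indicator ?D x * ?K \<le> G 0 x" for x
  proof (cases "x \<in> ?D")
    case True
    hence "peak * (1 - u) \<le> \<phi> x"
      using assms by (intro phi_ge_on_disc) auto
    hence "(peak * (1 - u)) powr p \<le> \<phi> x powr p"
      using assms peak_pos p_gt_1 by (intro powr_mono2) auto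
    thus ?thesis
      using True by (simp add: cut_density_0)
  qed (simp add: cut_density_nonneg)
  hence "(LINT x|lborel. indicator ?D x * ?K) \<le> N 0"
    unfolding cut_mass_def by (intro integral_mono int_D integrable_cut_density) auto
  moreover have "measure lborel ?D = pi * (r \<gamma>)\<^sup>2 * (exp (u * \<gamma> powr p) - 1)"
    using level_radius_nonneg[of u] assms gamma_pos
    by (simp add: measure_cball_real2 level_radius_def power_mult_distrib)
  ultimately show ?thesis
    by simp
qed

lemma cut_mass_0_ge_exp:
  assumes "p \<le> 2"
  shows "pi * (r \<gamma>)\<^sup>2 * (exp (\<gamma> powr p) - 1) * (exp ((2 - p) / 4 * \<gamma> powr p) - 1) \<le> N 0"
proof -
  \<comment> \<open>This choice of u makes 2 / p * (1 - 2 * u) = 1.\<close>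
  define u where "u = (2 - p) / 4"
  have u: "0 \<le> u" "u \<le> 1"
    using assms p_gt_1 by (simp_all add: u_def)
  have "(1 - u)\<^sup>2 \<le> (1 - u) powr p"
    using u assms powr_mono'[of p 2 "1 - u"] by (simp add: powr_numeral)
  moreover have "1 - 2 * u \<le> (1 - u)\<^sup>2"
    by (simp add: power2_eq_square algebra_simps)
  ultimately have "1 - 2 * u \<le> (1 - u) powr p"
    by linarith
  have "\<gamma> powr p = 2 / p * \<gamma> powr p * (1 - 2 * u)"
    using p_gt_1 by (simp add: u_def field_simps)
  also have "\<dots> \<le> 2 / p * \<gamma> powr p * (1 - u) powr p"
    using \<open>1 - 2 * u \<le> (1 - u) powr p\<close> p_gt_1 by (intro mult_left_mono) auto
  also have "\<dots> = (peak * (1 - u)) powr p"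
    using u by (simp add: peak_mult_powr)
  finally have "exp (\<gamma> powr p) - 1 \<le> exp ((peak * (1 - u)) powr p) - 1"
    by simp
  hence "pi * (r \<gamma>)\<^sup>2 * (exp (u * \<gamma> powr p) - 1) * (exp (\<gamma> powr p) - 1)
      \<le> pi * (r \<gamma>)\<^sup>2 * (exp (u * \<gamma> powr p) - 1) * (exp ((peak * (1 - u)) powr p) - 1)"
    using u gamma_pos by (intro mult_left_mono) auto
  also have "\<dots> \<le> N 0"
    by (rule cut_mass_0_ge[OF u])
  finally show ?thesis
    by (simp add: u_def mult_ac)
qed

end

lemma eventually_two_exp_neg_gap_le:
  fixes p e c :: real
  assumes "1 < p" "0 < e" "0 < c"
  shows "\<forall>\<^sub>F M in at_top. 2 * exp (- (e * (M - e) powr (p - 1))) \<le> c"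
proof -
  have "filterlim (\<lambda>M. M - e) at_top at_top"
    using filterlim_tendsto_add_at_top[OF tendsto_const[of "- e"] filterlim_ident] by simp
  hence "filterlim (\<lambda>M. e * (M - e) powr (p - 1)) at_top at_top"
    using assms
    by (intro filterlim_tendsto_pos_mult_at_top[OF tendsto_const]
        filterlim_compose[OF filterlim_powr_at_top]) auto
  hence "\<forall>\<^sub>F M in at_top. ln (2 / c) \<le> e * (M - e) powr (p - 1)"
    by (simp add: filterlim_at_top)
  thus ?thesis
  proof eventually_elim
    case (elim M)
    hence "exp (- (e * (M - e) powr (p - 1))) \<le> exp (- ln (2 / c))"
      by simp
    thus ?case
      using assms by (simp add: exp_minus)
  qed
qed

lemma cut_mass_eventually_lt:
  fixes p e c :: real and r :: "real \<Rightarrow> real"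
  assumes "1 < p" "p < 2" "\<And>\<gamma>. 0 < \<gamma> \<Longrightarrow> 0 < r \<gamma>" "0 < e" "0 < c"
  shows "\<forall>\<^sub>F \<gamma> in at_top. cut_mass p r \<gamma> e < c * cut_mass p r \<gamma> 0"
proof -
  have "\<exists>M. 1 + e \<le> M \<and> 2 * exp (- (e * (M - e) powr (p - 1))) \<le> c / 2"
    by (rule eventually_happens'[OF _ eventually_conj[OF eventually_ge_at_top
          eventually_two_exp_neg_gap_le]]) (use assms in auto)
  then obtain M where "1 + e \<le> M" and "2 * exp (- (e * (M - e) powr (p - 1))) \<le> c / 2"
    by blast
  hence M: "1 \<le> M" "e < M" "2 * exp (- (e * (M - e) powr (p - 1))) \<le> c / 2"
    using assms by auto
  have "filterlim (\<lambda>\<gamma>. exp ((2 - p) / 4 * \<gamma> powr p)) at_top at_top"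
    using assms
    by (intro filterlim_compose[OF exp_at_top] filterlim_tendsto_pos_mult_at_top[OF tendsto_const]
        filterlim_powr_at_top) auto
  hence "\<forall>\<^sub>F \<gamma> in at_top. 2 / c * exp (M powr p) + 1 < exp ((2 - p) / 4 * \<gamma> powr p)"
    by (simp add: filterlim_at_top_dense)
  moreover have "\<forall>\<^sub>F \<gamma> in at_top. (0::real) < \<gamma>"
    by (rule eventually_gt_at_top)
  ultimately show ?thesis
  proof eventually_elim
    case (elim \<gamma>)
    interpret log_profile p r \<gamma>
      using assms elim by unfold_locales auto
    define A where "A = pi * (r \<gamma>)\<^sup>2 * (exp (\<gamma> powr p) - 1)"
    have "0 < A"
      unfolding A_def using r_pos gamma_pos by simp
    have "exp (M powr p) < c / 2 * (exp ((2 - p) / 4 * \<gamma> powr p) - 1)"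
      using elim assms by (simp add: field_simps)
    hence "A * exp (M powr p) < c / 2 * (A * (exp ((2 - p) / 4 * \<gamma> powr p) - 1))"
      using \<open>0 < A\<close> by (simp add: mult.left_commute)
    also have "\<dots> \<le> c / 2 * N 0"
      using cut_mass_0_ge_exp assms unfolding A_def by simp
    finally have "A * exp (M powr p) < c / 2 * N 0" .
    moreover have "N e \<le> c / 2 * N 0 + A * exp (M powr p)"
      using cut_mass_le[OF assms(4) M(2,1,3)] by (simp add: A_def)
    ultimately show ?case
      by simp
  qed
qed

theorem lemma1p9:
  fixes p tbar :: real and r :: "real \<Rightarrow> real"
  assumes "1 < p" "p < 2"
    and "\<And>\<gamma>. \<gamma> > 0 \<Longrightarrow> r \<gamma> > 0"
    and "r \<in> o[at_top](\<lambda>\<gamma>. exp (- (\<gamma> powr p)))"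
    and "(\<lambda>\<gamma>. ln (r \<gamma> * exp (\<gamma> powr p))) \<in> o[at_top](\<lambda>\<gamma>. \<gamma> powr p)"
    and "0 < tbar" "tbar \<le> 1"
  shows "uniform_limit {tbar..1} (\<lambda>\<gamma> t. tau p r t \<gamma>) (\<lambda>t. 0) at_top"
  unfolding uniform_limit_iff
proof (intro allI impI)
  fix e :: real
  assume "0 < e"
  have "\<forall>\<^sub>F \<gamma> in at_top. 0 < \<gamma> \<and> cut_mass p r \<gamma> e < tbar * cut_mass p r \<gamma> 0"
    using eventually_gt_at_top cut_mass_eventually_lt[OF assms(1-3) \<open>0 < e\<close> assms(6)]
    by (rule eventually_conj)
  thus "\<forall>\<^sub>F \<gamma> in at_top. \<forall>t\<in>{tbar..1}. dist (tau p r t \<gamma>) 0 < e"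
  proof eventually_elim
    case (elim \<gamma>)
    interpret log_profile p r \<gamma>
      using assms elim by unfold_locales auto
    show ?case
    proof
      fix t
      assume t: "t \<in> {tbar..1}"
      have "tbar * N 0 \<le> t * N 0"
        using t cut_mass_0_pos by (intro mult_right_mono) auto
      hence "N e < t * N 0"
        using elim by linarith
      hence "tau p r t \<gamma> < e"
        using t assms \<open>0 < e\<close> by (intro tau_lt) auto
      thus "dist (tau p r t \<gamma>) 0 < e"
        using tau_spec(1)[of t] t assms by auto
    qed
  qed
qed

end
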